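(* For every $n\ge3$ there exist perfect copositive $n\times n$ matrices in $(\mathcal{S}^n_{\ge0}+\mathcal{N}^n)\setminus(\mathcal{S}^n_{\ge0}\cup\mathcal{N}^n)$, i.e.\ perfect copositive matrices that are sums of a positive semidefinite and a nonnegative matrix but are themselves neither positive semidefinite nor entrywise nonnegative.
   Context: $\mathcal{S}^n$: real symmetric $n\times n$ matrices; $\mathcal{S}^n_{\ge0}$: positive semidefinite ones; $\mathcal{N}^n$: entrywise nonnegative symmetric ones; $B[v]=v^\top Bv$; $\mathcal{COP}^n=\{B\in\mathcal{S}^n: B[x]\ge0\ \forall x\in\mathbb{R}^n_{\ge0}\}$; strictly copositive means lying in the interior of $\mathcal{COP}^n$. $\min_{\mathcal{COP}}B=\inf\{B[v]: v\in\mathbb{Z}^n_{\ge0}\setminus\{0\}\}$, $\operatorname{Min}_{\mathcal{COP}}B=\{v\in\mathbb{Z}^n_{\ge0}: B[v]=\min_{\mathcal{COP}}B\}$. A strictly copositive $P$ is perfect copositive if it is the unique $Q\in\mathcal{S}^n$ with $Q[v]=\min_{\mathcal{COP}}P$ for all $v\in\operatorname{Min}_{\mathcal{COP}}P$. *)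

theory Defs
  imports "HOL-Analysis.Analysis"
begin

text \<open>Real n x n matrices are represented as real^'n^'n, with n = CARD('n).\<close>

definition sym_mat :: "real^'n^'n \<Rightarrow> bool" where
  "sym_mat A \<longleftrightarrow> transpose A = A"

definition qform :: "real^'n^'n \<Rightarrow> real^'n \<Rightarrow> real" where
  "qform B v = v \<bullet> (B *v v)"

definition psd_mat :: "real^'n^'n \<Rightarrow> bool" where
  "psd_mat A \<longleftrightarrow> sym_mat A \<and> (\<forall>v. qform A v \<ge> 0)"

definition nonneg_mat :: "real^'n^'n \<Rightarrow> bool" where
  "nonneg_mat A \<longleftrightarrow> sym_mat A \<and> (\<forall>i j. A $ i $ j \<ge> 0)"

definition copositive :: "real^'n^'n \<Rightarrow> bool" where
  "copositive B \<longleftrightarrow> sym_mat B \<and> (\<forall>x. (\<forall>i. x $ i \<ge> 0) \<longrightarrow> qform B x \<ge> 0)"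

text \<open>Strictly copositive: interior of COP^n, taken in the space S^n of symmetric matrices.\<close>
definition strictly_copositive :: "real^'n^'n \<Rightarrow> bool" where
  "strictly_copositive B \<longleftrightarrow> copositive B \<and>
     (\<exists>e>0. \<forall>C. sym_mat C \<and> dist C B < e \<longrightarrow> copositive C)"

definition nonneg_int_vecs :: "(real^'n) set" where
  "nonneg_int_vecs = {v. \<forall>i. v $ i \<in> \<int> \<and> v $ i \<ge> 0}"

definition min_cop :: "real^'n^'n \<Rightarrow> real" where
  "min_cop B = Inf ((qform B) ` (nonneg_int_vecs - {0}))"

definition Min_cop :: "real^'n^'n \<Rightarrow> (real^'n) set" where
  "Min_cop B = {v \<in> nonneg_int_vecs. qform B v = min_cop B}"

definition perfect_copositive :: "real^'n^'n \<Rightarrow> bool" where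
  "perfect_copositive P \<longleftrightarrow> strictly_copositive P \<and>
     (\<forall>Q. sym_mat Q \<and> (\<forall>v \<in> Min_cop P. qform Q v = min_cop P) \<longleftrightarrow> Q = P)"

end

theory Submission
  imports Defs
begin

text \<open>
  Blow up the \<open>3 \<times> 3\<close> matrix \<open>P\<^sub>3 = S\<^sub>3 + N\<^sub>3\<close>, with \<open>S\<^sub>3\<close> positive definite and \<open>N\<^sub>3 \<ge> 0\<close>
  supported on the entries \<open>(0,1)\<close>, along the partition of the index set into \<open>{b}\<close>, \<open>{c}\<close>
  and the rest: rows and columns outside \<open>{b, c}\<close> are all copies of the first row and
  column of \<open>P\<^sub>3\<close>. The quadratic form of the blow-up is that of \<open>P\<^sub>3\<close> evaluated at the class
  sums of \<open>x\<close>. On the nonnegative orthant the \<open>N\<^sub>3\<close>-term is nonnegative, so the form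
  dominates \<open>\<parallel>x\<parallel>\<^sup>2/100\<close>, which gives strict copositivity; since the form is integral on
  integer vectors, its minimum is \<open>1\<close>. The minimal vectors \<open>e\<^sub>i\<close>, \<open>e\<^sub>b + e\<^sub>c\<close>, \<open>2e\<^sub>b + e\<^sub>c\<close>,
  \<open>3e\<^sub>b + 2e\<^sub>c\<close>, \<open>2e\<^sub>i + e\<^sub>c\<close>, \<open>e\<^sub>i + e\<^sub>b + e\<^sub>c\<close> and \<open>e\<^sub>i + e\<^sub>k + e\<^sub>c\<close> (\<open>i, k \<notin> {b, c}\<close>) already determine
  every entry, so the blow-up is perfect. It is not positive semidefinite, as
  \<open>2e\<^sub>a - e\<^sub>b\<close> has value \<open>-1\<close>, and it has the negative entry \<open>-5/2\<close> at \<open>(a, c)\<close>.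
\<close>

lemma sym_mat_nth:
  assumes "sym_mat A"
  shows "A $ j $ i = A $ i $ j"
proof -
  have "transpose A $ j $ i = A $ i $ j"
    by (simp add: transpose_def)
  then show ?thesis
    using assms by (simp add: sym_mat_def)
qed

lemma qform_diff: "qform (A - B) x = qform A x - qform B x"
  by (simp add: qform_def matrix_vector_mult_diff_rdistrib inner_diff_right)

lemma inner_axis_matrix_vector_mult_axis:
  "axis i s \<bullet> ((Q::real^'n::finite^'n) *v axis j t) = s * t * Q$i$j"
proof -
  have "(Q *v axis j t) $ i = Q$i$j * t"
    by (simp add: matrix_vector_mult_def axis_def if_distrib cong: if_cong)
  then show ?thesis by (simp add: inner_axis')
qed

lemma qform_axis: "qform (Q::real^'n::finite^'n) (axis i s) = s * s * Q$i$i"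
  by (simp add: qform_def inner_axis_matrix_vector_mult_axis)

lemma qform_axis2: "qform (Q::real^'n::finite^'n) (axis i s + axis j t) =
    s * s * Q$i$i + t * t * Q$j$j + s * t * (Q$i$j + Q$j$i)"
  by (simp add: qform_def matrix_vector_right_distrib inner_add_left inner_add_right
      inner_axis_matrix_vector_mult_axis algebra_simps)

lemma qform_axis3: "qform (Q::real^'n::finite^'n) (axis i s + axis j t + axis k u) =
    s * s * Q$i$i + t * t * Q$j$j + u * u * Q$k$k
    + s * t * (Q$i$j + Q$j$i) + s * u * (Q$i$k + Q$k$i) + t * u * (Q$j$k + Q$k$j)"
  by (simp add: qform_def matrix_vector_right_distrib inner_add_left inner_add_right
      inner_axis_matrix_vector_mult_axis algebra_simps)

lemma norm_matrix_vector_mult_le: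
  fixes E :: "real^'n::finite^'n"
  shows "norm (E *v x) \<le> real CARD('n) * norm E * norm x"
proof -
  have "norm (E *v x) \<le> (\<Sum>i\<in>UNIV. \<bar>(E *v x) $ i\<bar>)"
    by (rule norm_le_l1_cart)
  also have "\<dots> \<le> (\<Sum>i\<in>(UNIV::'n set). norm E * norm x)"
  proof (rule sum_mono)
    fix i
    have "\<bar>(E *v x) $ i\<bar> \<le> norm (E$i) * norm x"
      by (simp add: matrix_mult_dot Cauchy_Schwarz_ineq2)
    also have "\<dots> \<le> norm E * norm x"
      using Finite_Cartesian_Product.norm_nth_le[of E i] by (simp add: mult_right_mono)
    finally show "\<bar>(E *v x) $ i\<bar> \<le> norm E * norm x" .
  qed
  finally show ?thesis by simp
qed

lemma abs_qform_le:
  fixes E :: "real^'n::finite^'n"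
  shows "\<bar>qform E x\<bar> \<le> real CARD('n) * norm E * norm x ^ 2"
proof -
  have "\<bar>qform E x\<bar> \<le> norm x * norm (E *v x)"
    unfolding qform_def by (rule Cauchy_Schwarz_ineq2)
  also have "\<dots> \<le> norm x * (real CARD('n) * norm E * norm x)"
    by (simp add: mult_left_mono norm_matrix_vector_mult_le)
  finally show ?thesis by (simp add: power2_eq_square mult_ac)
qed

text \<open>A form bounded below by \<open>\<delta> \<parallel>x\<parallel>\<^sup>2\<close> on the orthant stays copositive under perturbations
  of norm below \<open>\<delta> / n\<close>.\<close>

lemma strictly_copositive_if_coercive:
  fixes P :: "real^'n::finite^'n"
  assumes "sym_mat P" "\<delta> > 0"
    and coercive: "\<And>x. \<forall>i. 0 \<le> x $ i \<Longrightarrow> \<delta> * norm x ^ 2 \<le> qform P x"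
  shows "strictly_copositive P"
proof -
  have "copositive C" if "sym_mat C" "dist C P < \<delta> / real CARD('n)" for C
    unfolding copositive_def
  proof (intro conjI allI impI)
    fix x :: "real^'n" assume x: "\<forall>i. 0 \<le> x $ i"
    have "real CARD('n) * norm (C - P) \<le> \<delta>"
      using that(2) by (simp add: dist_norm field_simps)
    then have "real CARD('n) * norm (C - P) * norm x ^ 2 \<le> \<delta> * norm x ^ 2"
      by (rule mult_right_mono) simp
    moreover have "\<bar>qform (C - P) x\<bar> \<le> real CARD('n) * norm (C - P) * norm x ^ 2"
      by (rule abs_qform_le)
    moreover have "qform C x = qform P x + qform (C - P) x"
      by (simp add: qform_diff)
    ultimately show "0 \<le> qform C x"
      using coercive[OF x] by linarith
  qed (use that in simp)
  moreover have "copositive P"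
    using assms by (simp add: copositive_def order_trans[OF _ coercive])
  moreover have "\<delta> / real CARD('n) > 0"
    using assms(2) by simp
  ultimately show ?thesis
    unfolding strictly_copositive_def by blast
qed

lemma axis_in_nonneg_int_vecs: "s \<in> \<nat> \<Longrightarrow> axis i s \<in> nonneg_int_vecs"
  by (auto simp: nonneg_int_vecs_def axis_def elim!: Nats_cases)

lemma add_in_nonneg_int_vecs:
  "u \<in> nonneg_int_vecs \<Longrightarrow> v \<in> nonneg_int_vecs \<Longrightarrow> u + v \<in> nonneg_int_vecs"
  by (simp add: nonneg_int_vecs_def)

lemma min_cop_eq_1:
  assumes ge_1: "\<And>v. v \<in> nonneg_int_vecs \<Longrightarrow> v \<noteq> 0 \<Longrightarrow> 1 \<le> qform P v"
    and "u \<in> nonneg_int_vecs" "u \<noteq> 0" "qform P u = 1"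
  shows "min_cop P = 1"
  unfolding min_cop_def
proof (rule cInf_eq_minimum)
  show "1 \<in> qform P ` (nonneg_int_vecs - {0})"
    using assms(2-4) by force
qed (use ge_1 in blast)

definition blowup :: "('n::finite \<Rightarrow> 'k) \<Rightarrow> ('k \<Rightarrow> 'k \<Rightarrow> real) \<Rightarrow> real^'n^'n" where
  "blowup cls m = (\<chi> i j. m (cls i) (cls j))"

definition class_sum :: "('n::finite \<Rightarrow> 'k) \<Rightarrow> real^'n \<Rightarrow> 'k \<Rightarrow> real" where
  "class_sum cls x r = (\<Sum>j | cls j = r. x $ j)"

lemma blowup_nth [simp]: "blowup cls m $ i $ j = m (cls i) (cls j)"
  by (simp add: blowup_def)

lemma blowup_add: "blowup cls (\<lambda>r s. m r s + m' r s) = blowup cls m + blowup cls m'"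
  by (simp add: vec_eq_iff)

lemma sym_mat_blowup: "(\<And>r s. m r s = m s r) \<Longrightarrow> sym_mat (blowup cls m)"
  by (simp add: sym_mat_def transpose_def vec_eq_iff)

lemma sum_by_class:
  fixes h :: "'n::finite \<Rightarrow> real"
  assumes "finite K" "range cls \<subseteq> K"
  shows "(\<Sum>j\<in>UNIV. h j) = (\<Sum>r\<in>K. \<Sum>j | cls j = r. h j)"
  using sum.group[of UNIV K cls h] assms by simp

lemma sum_class_weighted:
  assumes "finite K" "range cls \<subseteq> K"
  shows "(\<Sum>j\<in>UNIV. g (cls j) * x $ j) = (\<Sum>r\<in>K. g r * class_sum cls x r)"
  unfolding sum_by_class[OF assms] class_sum_def sum_distrib_left
  by (intro sum.cong) auto

lemma qform_blowup:
  assumes "finite K" "range cls \<subseteq> K"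
  shows "qform (blowup cls m) x
    = (\<Sum>r\<in>K. \<Sum>s\<in>K. m r s * class_sum cls x r * class_sum cls x s)"
proof -
  have row: "(blowup cls m *v x) $ i = (\<Sum>s\<in>K. m (cls i) s * class_sum cls x s)" for i
    by (simp add: matrix_vector_mult_def sum_class_weighted[OF assms])
  have "qform (blowup cls m) x = (\<Sum>i\<in>UNIV. (\<Sum>s\<in>K. m (cls i) s * class_sum cls x s) * x $ i)"
    by (simp add: qform_def inner_vec_def row mult.commute)
  also have "\<dots> = (\<Sum>r\<in>K. (\<Sum>s\<in>K. m r s * class_sum cls x s) * class_sum cls x r)"
    by (rule sum_class_weighted[OF assms])
  finally show ?thesis
    by (simp add: sum_distrib_left sum_distrib_right mult_ac)
qed

lemma class_sum_nonneg: "\<forall>i. 0 \<le> x $ i \<Longrightarrow> 0 \<le> class_sum cls x r"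
  unfolding class_sum_def by (simp add: sum_nonneg)

lemma class_sum_Ints: "x \<in> nonneg_int_vecs \<Longrightarrow> class_sum cls x r \<in> \<int>"
  unfolding class_sum_def nonneg_int_vecs_def by (simp add: Ints_sum)

lemma sum_squares_le_square_sum:
  fixes f :: "'a \<Rightarrow> real"
  assumes "\<And>i. i \<in> A \<Longrightarrow> 0 \<le> f i"
  shows "(\<Sum>i\<in>A. f i ^ 2) \<le> (sum f A) ^ 2"
proof -
  have "L2_set f A ^ 2 \<le> (sum f A) ^ 2"
    using assms by (simp add: L2_set_le_sum power_mono)
  then show ?thesis
    by (simp add: L2_set_def sum_nonneg)
qed

lemma norm_sq_le_class_sums:
  assumes "finite K" "range cls \<subseteq> K" "\<forall>i. 0 \<le> x $ i"
  shows "norm x ^ 2 \<le> (\<Sum>r\<in>K. class_sum cls x r ^ 2)"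
proof -
  have "norm x ^ 2 = (\<Sum>j\<in>UNIV. x $ j ^ 2)"
    unfolding power2_norm_eq_inner inner_vec_def by (simp add: power2_eq_square)
  also have "\<dots> = (\<Sum>r\<in>K. \<Sum>j | cls j = r. x $ j ^ 2)"
    by (rule sum_by_class[OF assms(1,2)])
  also have "\<dots> \<le> (\<Sum>r\<in>K. class_sum cls x r ^ 2)"
    unfolding class_sum_def using assms(3)
    by (intro sum_mono sum_squares_le_square_sum) auto
  finally show ?thesis .
qed

text \<open>\<open>3 \<times> 3\<close> matrices with indices \<open>0, 1, 2\<close>; an off-diagonal entry is keyed by \<open>r + s\<close>.
  Thus \<open>P\<^sub>3\<close> has rows \<open>(1, 2, -5/2)\<close>, \<open>(2, 3, -9/2)\<close>, \<open>(-5/2, -9/2, 7)\<close>, and \<open>N\<^sub>3\<close> is \<open>2/5\<close>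
  at \<open>(0, 1)\<close> and \<open>(1, 0)\<close>.\<close>

definition S3 :: "nat \<Rightarrow> nat \<Rightarrow> real" where
  "S3 r s = (if r = s then (if r = 0 then 1 else if r = 1 then 3 else 7)
             else if r + s = 1 then 8/5 else if r + s = 2 then -5/2 else -9/2)"

definition N3 :: "nat \<Rightarrow> nat \<Rightarrow> real" where
  "N3 r s = (if r \<noteq> s \<and> r + s = 1 then 2/5 else 0)"

definition P3 :: "nat \<Rightarrow> nat \<Rightarrow> real" where
  "P3 r s = S3 r s + N3 r s"

lemma sum_lessThan_3: "(\<Sum>r<3. f r) = f 0 + f 1 + f (2::nat)"
  by (simp add: eval_nat_numeral)

lemma S3_form_eq: "(\<Sum>r<3. \<Sum>s<3. S3 r s * y r * y s)
    = y 0 ^ 2 + 3 * y 1 ^ 2 + 7 * y 2 ^ 2 + 16/5 * y 0 * y 1 - 5 * y 0 * y 2 - 9 * y 1 * y 2"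
  by (simp add: sum_lessThan_3 S3_def power2_eq_square algebra_simps)

lemma P3_form_eq: "(\<Sum>r<3. \<Sum>s<3. P3 r s * y r * y s)
    = y 0 ^ 2 + 3 * y 1 ^ 2 + 7 * y 2 ^ 2 + 4 * y 0 * y 1 - 5 * y 0 * y 2 - 9 * y 1 * y 2"
  by (simp add: sum_lessThan_3 P3_def S3_def N3_def power2_eq_square algebra_simps)

lemma S3_form_ge: "(\<Sum>r<3. y r ^ 2) / 100 \<le> (\<Sum>r<3. \<Sum>s<3. S3 r s * y r * y s)"
proof -
  have sos: "u^2 + 3 * v^2 + 7 * w^2 + 16/5 * u * v - 5 * u * w - 9 * v * w - (u^2 + v^2 + w^2) / 100
      = 99/100 * (u + 160/99 * v - 250/99 * w) ^ 2
        + 4001/9900 * (v - 4550/4001 * w) ^ 2 + 61699/400100 * w ^ 2" for u v w :: real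
    by (simp add: power2_eq_square field_simps)
  have "0 \<le> 99/100 * (u + 160/99 * v - 250/99 * w) ^ 2
        + 4001/9900 * (v - 4550/4001 * w) ^ 2 + 61699/400100 * w ^ 2" for u v w :: real
    by simp
  from this[of "y 0" "y 1" "y 2"] show ?thesis
    using S3_form_eq[of y] sos[of "y 0" "y 1" "y 2"] sum_lessThan_3[of "\<lambda>r. y r ^ 2"]
    by (smt (verit))
qed

lemma P3_form_ge:
  assumes "0 \<le> y 0 * y 1"
  shows "(\<Sum>r<3. y r ^ 2) / 100 \<le> (\<Sum>r<3. \<Sum>s<3. P3 r s * y r * y s)"
  using S3_form_ge[of y] assms unfolding S3_form_eq P3_form_eq by linarith

lemma qform_blowup3:
  fixes cls :: "'n::finite \<Rightarrow> nat"
  assumes "range cls \<subseteq> {..<3}"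
  shows "qform (blowup cls m) x
    = (\<Sum>r<3. \<Sum>s<3. m r s * class_sum cls x r * class_sum cls x s)"
  by (rule qform_blowup[OF finite_lessThan assms])

lemma psd_mat_blowup_S3:
  assumes "range cls \<subseteq> {..<3}"
  shows "psd_mat (blowup cls S3)"
  unfolding psd_mat_def
proof (intro conjI allI)
  show "sym_mat (blowup cls S3)"
    by (rule sym_mat_blowup) (auto simp: S3_def add.commute)
  show "0 \<le> qform (blowup cls S3) v" for v
    unfolding qform_blowup3[OF assms]
    by (rule order_trans[OF _ S3_form_ge]) (simp add: sum_nonneg)
qed

lemma nonneg_mat_blowup_N3: "nonneg_mat (blowup cls N3)"
  unfolding nonneg_mat_def
  by (auto intro: sym_mat_blowup simp: N3_def add.commute)

lemma blowup_P3_eq: "blowup cls P3 = blowup cls S3 + blowup cls N3"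
  unfolding P3_def by (rule blowup_add)

lemma sym_mat_blowup_P3: "sym_mat (blowup cls P3)"
  by (rule sym_mat_blowup) (auto simp: P3_def S3_def N3_def add.commute)

lemma qform_blowup_P3_ge:
  assumes "range cls \<subseteq> {..<3}" "\<forall>i. 0 \<le> x $ i"
  shows "norm x ^ 2 / 100 \<le> qform (blowup cls P3) x"
proof -
  have "norm x ^ 2 \<le> (\<Sum>r<3. class_sum cls x r ^ 2)"
    by (rule norm_sq_le_class_sums[OF finite_lessThan assms])
  moreover have "0 \<le> class_sum cls x 0 * class_sum cls x 1"
    by (intro mult_nonneg_nonneg class_sum_nonneg[OF assms(2)])
  ultimately show ?thesis
    unfolding qform_blowup3[OF assms(1)]
    using P3_form_ge[of "class_sum cls x"] by linarith
qed

lemma strictly_copositive_blowup_P3: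
  assumes "range cls \<subseteq> {..<3}"
  shows "strictly_copositive (blowup cls P3)"
  by (rule strictly_copositive_if_coercive[OF sym_mat_blowup_P3, of "1/100"])
    (use qform_blowup_P3_ge[OF assms] in auto)

lemma one_le_qform_blowup_P3:
  assumes "range cls \<subseteq> {..<3}" "v \<in> nonneg_int_vecs" "v \<noteq> 0"
  shows "1 \<le> qform (blowup cls P3) v"
proof -
  have "qform (blowup cls P3) v \<in> \<int>"
    unfolding qform_blowup3[OF assms(1)] P3_form_eq
    using class_sum_Ints[OF assms(2)] by (intro Ints_add Ints_diff Ints_mult Ints_power) auto
  moreover have "0 < qform (blowup cls P3) v"
  proof -
    have "\<forall>i. 0 \<le> v $ i"
      using assms(2) by (simp add: nonneg_int_vecs_def)
    then have "norm v ^ 2 / 100 \<le> qform (blowup cls P3) v"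
      by (rule qform_blowup_P3_ge[OF assms(1)])
    moreover have "0 < norm v ^ 2 / 100"
      using assms(3) by simp
    ultimately show ?thesis by linarith
  qed
  ultimately show ?thesis
    by (elim Ints_cases) simp
qed

lemma min_cop_blowup_P3:
  assumes "range cls \<subseteq> {..<3}" "cls a = 0"
  shows "min_cop (blowup cls P3) = 1"
proof (rule min_cop_eq_1)
  show "qform (blowup cls P3) (axis a 1) = 1"
    using assms(2) by (simp add: qform_axis P3_def S3_def N3_def)
qed (auto intro: one_le_qform_blowup_P3[OF assms(1)] axis_in_nonneg_int_vecs simp: axis_eq_0_iff)

lemma not_psd_mat_blowup_P3:
  assumes "cls a = 0" "cls b = 1"
  shows "\<not> psd_mat (blowup cls P3)"
proof -
  have "a \<noteq> b" using assms by auto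
  then have "qform (blowup cls P3) (axis a 2 + axis b (-1)) = -1"
    using assms by (simp add: qform_axis2 P3_def S3_def N3_def)
  then show ?thesis
    by (auto simp: psd_mat_def intro: exI[of _ "axis a 2 + axis b (-1)"])
qed

lemma not_nonneg_mat_blowup_P3:
  assumes "cls a = 0" "cls c = 2"
  shows "\<not> nonneg_mat (blowup cls P3)"
proof
  assume "nonneg_mat (blowup cls P3)"
  then have "0 \<le> blowup cls P3 $ a $ c"
    by (simp add: nonneg_mat_def)
  then show False
    using assms by (simp add: P3_def S3_def N3_def)
qed

definition block_index :: "'n \<Rightarrow> 'n \<Rightarrow> 'n \<Rightarrow> nat" where
  "block_index b c i = (if i = b then 1 else if i = c then 2 else 0)"

lemma range_block_index: "range (block_index b c) \<subseteq> {..<3}"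
  by (auto simp: block_index_def)

definition pinning_vectors :: "'n::finite \<Rightarrow> 'n \<Rightarrow> (real^'n) set" where
  "pinning_vectors b c =
     {axis b 1 + axis c 1, axis b 2 + axis c 1, axis b 3 + axis c 2}
     \<union> {axis i 1 | i. i \<notin> {b, c}} \<union> {axis i 2 + axis c 1 | i. i \<notin> {b, c}}
     \<union> {axis i 1 + axis b 1 + axis c 1 | i. i \<notin> {b, c}}
     \<union> {axis i 1 + axis k 1 + axis c 1 | i k. i \<notin> {b, c} \<and> k \<notin> {b, c} \<and> i \<noteq> k}"

lemma pinning_vectors_minimal:
  assumes "b \<noteq> c" "v \<in> pinning_vectors b c"
  shows "v \<in> nonneg_int_vecs" "qform (blowup (block_index b c) P3) v = 1"
  using assms
  by (auto simp: pinning_vectors_def qform_axis qform_axis2 qform_axis3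
      P3_def S3_def N3_def block_index_def
      intro!: add_in_nonneg_int_vecs axis_in_nonneg_int_vecs)

lemma eq_0_if_block_entries_vanish:
  fixes D :: "real^'n::finite^'n"
  assumes sym: "\<And>i j. D$j$i = D$i$j"
    and "D$b$b = 0" "D$c$c = 0" "D$b$c = 0"
    and "\<And>i. i \<notin> {b, c} \<Longrightarrow> D$i$b = 0 \<and> D$i$c = 0"
    and "\<And>i k. i \<notin> {b, c} \<Longrightarrow> k \<notin> {b, c} \<Longrightarrow> D$i$k = 0"
  shows "D = 0"
proof -
  have "D$i$j = 0" if "j \<notin> {b, c}" for i j
    using assms(5)[OF that] assms(6)[OF _ that] sym[of j i] by (cases "i \<in> {b, c}") auto
  moreover have "D$i$j = 0" if "i \<notin> {b, c}" for i j
    using assms(5)[OF that] assms(6)[OF that] by (cases "j \<in> {b, c}") auto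
  ultimately have "D$i$j = 0" for i j
    using assms(2-4) sym[of b c] by (cases "i \<in> {b, c}"; cases "j \<in> {b, c}") auto
  then show ?thesis
    by (simp add: vec_eq_iff)
qed

lemma eq_0_if_qform_vanishes_on_pinning_vectors:
  fixes D :: "real^'n::finite^'n"
  assumes "b \<noteq> c" and sym: "\<And>i j. D$j$i = D$i$j"
    and vanish: "\<And>v. v \<in> pinning_vectors b c \<Longrightarrow> qform D v = 0"
  shows "D = 0"
proof (rule eq_0_if_block_entries_vanish[OF sym])
  have "qform D (axis b 1 + axis c 1) = 0" "qform D (axis b 2 + axis c 1) = 0"
    "qform D (axis b 3 + axis c 2) = 0"
    by (simp_all add: vanish pinning_vectors_def)
  then have "D$b$b + D$c$c + 2 * D$b$c = 0" "4 * D$b$b + D$c$c + 4 * D$b$c = 0"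
    "9 * D$b$b + 4 * D$c$c + 12 * D$b$c = 0"
    by (simp_all add: qform_axis2 sym[of b c])
  then show D_bb: "D$b$b = 0" and D_cc: "D$c$c = 0" and D_bc: "D$b$c = 0"
    by linarith+
  have D_ii: "D$i$i = 0" if "i \<notin> {b, c}" for i
  proof -
    have "qform D (axis i 1) = 0"
      using that by (intro vanish) (auto simp: pinning_vectors_def)
    then show ?thesis
      by (simp add: qform_axis)
  qed
  have D_ic: "D$i$c = 0" if "i \<notin> {b, c}" for i
  proof -
    have "qform D (axis i 2 + axis c 1) = 0"
      using that by (intro vanish) (auto simp: pinning_vectors_def)
    then show ?thesis
      using D_ii[OF that] D_cc by (simp add: qform_axis2 sym[of i c])
  qed
  show "D$i$b = 0 \<and> D$i$c = 0" if "i \<notin> {b, c}" for i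
  proof -
    have "qform D (axis i 1 + axis b 1 + axis c 1) = 0"
      using that by (intro vanish) (auto simp: pinning_vectors_def)
    then show ?thesis
      using D_ii[OF that] D_ic[OF that] D_bb D_cc D_bc
      by (simp add: qform_axis3 sym[of i b] sym[of i c] sym[of b c])
  qed
  show "D$i$k = 0" if "i \<notin> {b, c}" "k \<notin> {b, c}" for i k
  proof (cases "i = k")
    case False
    have "qform D (axis i 1 + axis k 1 + axis c 1) = 0"
      using that False by (intro vanish) (auto simp: pinning_vectors_def)
    then have "D$i$i + D$k$k + D$c$c + (D$i$k + D$k$i) + (D$i$c + D$c$i) + (D$k$c + D$c$k) = 0"
      by (simp add: qform_axis3)
    then show ?thesis
      using D_ii[OF that(1)] D_ii[OF that(2)] D_ic[OF that(1)] D_ic[OF that(2)] D_cc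
        sym[of i k] sym[of i c] sym[of k c]
      by linarith
  qed (use D_ii that in simp)
qed

lemma eq_blowup_P3_if_agrees_on_Min_cop:
  fixes Q :: "real^'n::finite^'n"
  assumes "a \<noteq> b" "a \<noteq> c" "b \<noteq> c" "sym_mat Q"
    and agree: "\<forall>v\<in>Min_cop (blowup (block_index b c) P3).
                  qform Q v = min_cop (blowup (block_index b c) P3)"
  shows "Q = blowup (block_index b c) P3"
proof -
  let ?P = "blowup (block_index b c) P3"
  have "min_cop ?P = 1"
    using assms(1,2) by (intro min_cop_blowup_P3[where a = a] range_block_index)
      (simp add: block_index_def)
  then have "qform (Q - ?P) v = 0" if "v \<in> pinning_vectors b c" for v
    using agree pinning_vectors_minimal[OF \<open>b \<noteq> c\<close> that]
    by (simp add: qform_diff Min_cop_def)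
  moreover have "(Q - ?P) $ j $ i = (Q - ?P) $ i $ j" for i j
    using sym_mat_nth[OF \<open>sym_mat Q\<close>] sym_mat_nth[OF sym_mat_blowup_P3] by simp
  ultimately have "Q - ?P = 0"
    by (intro eq_0_if_qform_vanishes_on_pinning_vectors[OF \<open>b \<noteq> c\<close>])
  then show ?thesis
    by simp
qed

lemma perfect_copositive_blowup_P3:
  assumes "a \<noteq> b" "a \<noteq> c" "b \<noteq> c"
  shows "perfect_copositive (blowup (block_index b c) P3)"
  unfolding perfect_copositive_def
proof (intro conjI allI iffI)
  show "strictly_copositive (blowup (block_index b c) P3)"
    by (rule strictly_copositive_blowup_P3[OF range_block_index])
next
  fix Q :: "real^'a^'a"
  assume "sym_mat Q \<and> (\<forall>v\<in>Min_cop (blowup (block_index b c) P3).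
            qform Q v = min_cop (blowup (block_index b c) P3))"
  then show "Q = blowup (block_index b c) P3"
    using eq_blowup_P3_if_agrees_on_Min_cop[OF assms] by blast
qed (simp_all add: sym_mat_blowup_P3 Min_cop_def)

theorem corollary5p6:
  assumes "CARD('n::finite) \<ge> 3"
  shows "\<exists>P :: real^'n^'n. perfect_copositive P \<and>
           (\<exists>S N. psd_mat S \<and> nonneg_mat N \<and> P = S + N) \<and>
           \<not> psd_mat P \<and> \<not> nonneg_mat P"
proof -
  obtain T :: "'n set" where "card T = 3"
    using obtain_subset_with_card_n[OF assms] by metis
  then obtain a b c :: 'n where distinct: "a \<noteq> b" "a \<noteq> c" "b \<noteq> c"
    by (auto simp: card_3_iff)
  then have "block_index b c a = 0" "block_index b c b = 1" "block_index b c c = 2"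
    by (simp_all add: block_index_def)
  then show ?thesis
    using perfect_copositive_blowup_P3[OF distinct] blowup_P3_eq
      psd_mat_blowup_S3[OF range_block_index] nonneg_mat_blowup_N3
      not_psd_mat_blowup_P3 not_nonneg_mat_blowup_P3
    by blast
qed

end
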